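(* Let $\mathcal{A}\in\mathbb{R}^{I_1\times I_2\times I_3}$, $r_2=\min\{I_1,I_2\}$, and let $\boldsymbol{A}_{(3)}=\boldsymbol{U}^{(3)}\boldsymbol{S}^{(3)}\boldsymbol{V}^{(3)T}$ be an SVD with singular values in descending order, $\boldsymbol{U}^{(3)}\in\mathbb{R}^{I_3\times I_3}$ orthogonal. Let $\widetilde{\mathcal{A}}=\mathcal{A}\times_3\boldsymbol{U}^{(3)T}$ and for $i=1,\dots,I_3$ let $s_{jji}$ ($j=1,\dots,r_2$) denote the singular values of the frontal slice $\widetilde{\mathcal{A}}(:,:,i)$ in descending order (the diagonal entries of the O-SVD core $\mathcal{S}$). Let $\boldsymbol{k}=[k_1;\boldsymbol{k}_2]$ with $1\le k_1\le I_3$ and $\boldsymbol{k}_2=[k_{21},\dots,k_{2k_1}]^T$, $0\le k_{2i}\le r_2$. Define the $\boldsymbol{k}$-term truncated O-SVD $$\mathcal{A}_{\boldsymbol{k}}=(\mathcal{U}_{k_2}*_3\mathcal{S}_{k_2}*_3\mathcal{V}_{k_2})\times_3\boldsymbol{U}^{(3)}_{k_1},$$ where $\boldsymbol{U}^{(3)}_{k_1}=\boldsymbol{U}^{(3)}(:,1:k_1)$ and, for each $i=1,\dots,k_1$, the slice $\mathcal{U}_{k_2}(:,:,i)\mathcal{S}_{k_2}(:,:,i)\mathcal{V}_{k_2}(:,:,i)$ equals the rank-$k_{2i}$ truncated SVD of $\widetilde{\mathcal{A}}(:,:,i)$ (i.e. $\mathcal{U}_{k_2}(:,1:k_{2i},i)$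 holds its $k_{2i}$ leading left singular vectors, $\mathcal{S}_{k_2}(1:k_{2i},1:k_{2i},i)=\mathrm{diag}(s_{11i},\dots,s_{k_{2i}k_{2i}i})$, $\mathcal{V}_{k_2}(1:k_{2i},:,i)$ holds the transposes of its $k_{2i}$ leading right singular vectors, all other entries zero). Then $$\|\mathcal{A}-\mathcal{A}_{\boldsymbol{k}}\|_F^2=\sum_{i=1}^{k_1}\sum_{j=k_{2i}+1}^{r_2}s_{jji}^2+\sum_{i=k_1+1}^{I_3}\sum_{j=1}^{r_2}s_{jji}^2 .$$
   Context: For $\mathcal{A}\in\mathbb{R}^{I_1\times I_2\times I_3}$, $\mathcal{A}(:,:,k)$ is the $k$-th frontal slice; $\boldsymbol{A}_{(3)}\in\mathbb{R}^{I_3\times I_1I_2}$ is the mode-3 unfolding whose columns are the mode-3 fibers. The mode-3 product with $\boldsymbol{M}\in\mathbb{R}^{J\times I_3}$ is $(\mathcal{A}\times_3\boldsymbol{M})_{ijl}=\sum_k a_{ijk}m_{lk}$. The slicewise product $\mathcal{A}*_3\mathcal{B}$ of tensors with compatible frontal slices is defined by $(\mathcal{A}*_3\mathcal{B})(:,:,k)=\mathcal{A}(:,:,k)\mathcal{B}(:,:,k)$. $\|\cdot\|_F$ is the square root of the sum of squares of all entries. *)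

theory Defs
  imports Main "HOL-Analysis.Analysis"
begin

text \<open>Conventions: all indices are 0-based. A real m x n matrix is a function
  nat => nat => real, entry (a,b) with a < m, b < n. A real I1 x I2 x I3 tensor
  is a function nat => nat => nat => real, entry (a,b,c) with a < I1, b < I2, c < I3.
  Entries outside the index range are irrelevant.\<close>

type_synonym mat = "nat \<Rightarrow> nat \<Rightarrow> real"
type_synonym tensor3 = "nat \<Rightarrow> nat \<Rightarrow> nat \<Rightarrow> real"

definition orthogonal_mat :: "nat \<Rightarrow> mat \<Rightarrow> bool" where
  "orthogonal_mat n U \<longleftrightarrow>
     (\<forall>i<n. \<forall>j<n. (\<Sum>k<n. U k i * U k j) = (if i = j then 1 else 0))"

definition is_svd :: "nat \<Rightarrow> nat \<Rightarrow> mat \<Rightarrow> mat \<Rightarrow> mat \<Rightarrow> mat \<Rightarrow> bool" where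
  "is_svd m n M U S V \<longleftrightarrow>
     orthogonal_mat m U \<and> orthogonal_mat n V \<and>
     (\<forall>j<m. \<forall>l<n. j \<noteq> l \<longrightarrow> S j l = 0) \<and>
     (\<forall>j<min m n. 0 \<le> S j j) \<and>
     (\<forall>j l. j \<le> l \<and> l < min m n \<longrightarrow> S l l \<le> S j j) \<and>
     (\<forall>a<m. \<forall>b<n. M a b = (\<Sum>j<m. \<Sum>l<n. U a j * S j l * V b l))"

definition unfold3 :: "nat \<Rightarrow> tensor3 \<Rightarrow> mat" where
  "unfold3 I1 A = (\<lambda>k c. A (c mod I1) (c div I1) k)"

definition mode3_prod :: "nat \<Rightarrow> tensor3 \<Rightarrow> mat \<Rightarrow> tensor3" where
  "mode3_prod n A M = (\<lambda>i j l. \<Sum>k<n. A i j k * M l k)"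

definition slice_prod :: "nat \<Rightarrow> tensor3 \<Rightarrow> tensor3 \<Rightarrow> tensor3" where
  "slice_prod n A B = (\<lambda>i j k. \<Sum>l<n. A i l k * B l j k)"

definition frob_norm :: "nat \<Rightarrow> nat \<Rightarrow> nat \<Rightarrow> tensor3 \<Rightarrow> real" where
  "frob_norm I1 I2 I3 A = sqrt (\<Sum>a<I1. \<Sum>b<I2. \<Sum>c<I3. (A a b c)\<^sup>2)"

end

theory Submission
  imports Defs
begin

text \<open>Write At = A x3 U3' for the rotated tensor. Orthogonality of U3 gives A = At x3 U3,
  and A_k is At x3 U3 with frontal slice i of At replaced by its rank-k2(i) truncated SVD for
  i < k1 and by zero otherwise. Multiplication by an orthogonal matrix along mode 3 preserves
  the Frobenius norm, so the squared error splits into the slice errors, and the squared error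
  of truncating an SVD is the sum of its discarded squared singular values, because the
  singular vectors are orthonormal.\<close>

lemma sum_power2_lincomb_orthonormal:
  fixes W :: mat and x :: "nat \<Rightarrow> real"
  assumes "finite J"
    and orth: "\<forall>k\<in>J. \<forall>k'\<in>J. (\<Sum>c<n. W c k * W c k') = (if k = k' then 1 else 0)"
  shows "(\<Sum>c<n. (\<Sum>k\<in>J. x k * W c k)\<^sup>2) = (\<Sum>k\<in>J. (x k)\<^sup>2)"
proof -
  have "(\<Sum>c<n. (\<Sum>k\<in>J. x k * W c k)\<^sup>2)
      = (\<Sum>c<n. \<Sum>k\<in>J. \<Sum>k'\<in>J. x k * x k' * (W c k * W c k'))"
    by (simp add: power2_eq_square sum_product algebra_simps)
  also have "\<dots> = (\<Sum>k\<in>J. \<Sum>k'\<in>J. x k * x k' * (\<Sum>c<n. W c k * W c k'))"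
    by (simp add: sum.swap[of _ "{..<n}"] sum_distrib_left)
  also have "\<dots> = (\<Sum>k\<in>J. \<Sum>k'\<in>J. x k * x k' * (if k = k' then 1 else 0))"
    using orth by (intro sum.cong refl) auto
  also have "\<dots> = (\<Sum>k\<in>J. (x k)\<^sup>2)"
    using \<open>finite J\<close> by (simp add: if_distrib power2_eq_square cong: if_cong)
  finally show ?thesis .
qed

text \<open>With P = U U', the orthonormality of the columns gives sum_j P(i,j)^2 = P(i,i) and
  trace P = n, hence sum_(i,j) (delta(i,j) - P(i,j))^2 = n - trace P = 0.\<close>
lemma orthogonal_mat_rows_orthonormal:
  assumes U: "orthogonal_mat n U" and "i < n" "j < n"
  shows "(\<Sum>k<n. U i k * U j k) = (if i = j then 1 else 0)"
proof -
  define P where "P i j = (\<Sum>k<n. U i k * U j k)" for i j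
  have cols: "\<forall>k\<in>{..<n}. \<forall>k'\<in>{..<n}. (\<Sum>c<n. U c k * U c k') = (if k = k' then 1 else 0)"
    using U unfolding orthogonal_mat_def by blast
  have row_sq: "(\<Sum>j<n. (P i j)\<^sup>2) = P i i" for i
    using sum_power2_lincomb_orthonormal[OF _ cols, of "U i"]
    by (simp add: P_def power2_eq_square)
  have trace: "(\<Sum>i<n. P i i) = n"
  proof -
    have "(\<Sum>i<n. P i i) = (\<Sum>k<n. \<Sum>i<n. U i k * U i k)"
      unfolding P_def by (rule sum.swap)
    also have "\<dots> = (\<Sum>k<n. 1)" using cols by (intro sum.cong refl) auto
    finally show ?thesis by simp
  qed
  have row_defect: "(\<Sum>j<n. ((if i = j then 1 else 0) - P i j)\<^sup>2) = 1 - P i i" if "i < n" for i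
  proof -
    have "(\<Sum>j<n. ((if i = j then 1 else 0) - P i j)\<^sup>2)
        = (\<Sum>j<n. (if i = j then 1 - 2 * P i j else 0) + (P i j)\<^sup>2)"
      by (intro sum.cong refl) (auto simp: power2_eq_square algebra_simps)
    also have "\<dots> = 1 - P i i" using that row_sq[of i] by (simp add: sum.distrib)
    finally show ?thesis .
  qed
  have "(\<Sum>i<n. \<Sum>j<n. ((if i = j then 1 else 0) - P i j)\<^sup>2) = (\<Sum>i<n. 1 - P i i)"
    using row_defect by (intro sum.cong refl) auto
  also have "\<dots> = 0" using trace by (simp add: sum_subtractf)
  finally have "\<forall>i\<in>{..<n}. \<forall>j\<in>{..<n}. ((if i = j then 1 else 0) - P i j)\<^sup>2 = 0"
    by (simp add: sum_nonneg_eq_0_iff sum_nonneg)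
  then show ?thesis using \<open>i < n\<close> \<open>j < n\<close> by (simp add: P_def)
qed

lemma mode3_prod_orthogonal_inverse:
  assumes "orthogonal_mat n U" and "c < n"
  shows "mode3_prod n (mode3_prod n A (\<lambda>l k. U k l)) U a b c = A a b c"
proof -
  have "mode3_prod n (mode3_prod n A (\<lambda>l k. U k l)) U a b c
      = (\<Sum>k<n. \<Sum>k'<n. A a b k' * (U k' k * U c k))"
    by (simp add: mode3_prod_def sum_distrib_right mult.assoc)
  also have "\<dots> = (\<Sum>k'<n. A a b k' * (\<Sum>k<n. U k' k * U c k))"
    by (subst sum.swap) (simp add: sum_distrib_left)
  also have "\<dots> = (\<Sum>k'<n. A a b k' * (if k' = c then 1 else 0))"
    using orthogonal_mat_rows_orthonormal[OF assms(1) _ assms(2)] by (intro sum.cong refl) auto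
  also have "\<dots> = A a b c" using assms(2) by (simp add: if_distrib cong: if_cong)
  finally show ?thesis .
qed

lemma sum_power2_mode3_prod_orthogonal:
  assumes "orthogonal_mat n U"
  shows "(\<Sum>a<I1. \<Sum>b<I2. \<Sum>c<n. (mode3_prod n X U a b c)\<^sup>2)
       = (\<Sum>k<n. \<Sum>a<I1. \<Sum>b<I2. (X a b k)\<^sup>2)"
proof -
  have cols: "\<forall>k\<in>{..<n}. \<forall>k'\<in>{..<n}. (\<Sum>c<n. U c k * U c k') = (if k = k' then 1 else 0)"
    using assms unfolding orthogonal_mat_def by blast
  have "(\<Sum>a<I1. \<Sum>b<I2. \<Sum>c<n. (mode3_prod n X U a b c)\<^sup>2)
      = (\<Sum>a<I1. \<Sum>b<I2. \<Sum>k<n. (X a b k)\<^sup>2)"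
    unfolding mode3_prod_def by (intro sum.cong refl sum_power2_lincomb_orthonormal[OF _ cols]) simp
  also have "\<dots> = (\<Sum>k<n. \<Sum>a<I1. \<Sum>b<I2. (X a b k)\<^sup>2)"
    by (simp add: sum.swap[where B = "{..<n}"])
  finally show ?thesis .
qed

lemma is_svd_diagonal_expansion:
  assumes svd: "is_svd m n M U S V" and "a < m" "b < n"
  shows "M a b = (\<Sum>j<min m n. U a j * S j j * V b j)"
proof -
  have "M a b = (\<Sum>j<m. \<Sum>l<n. U a j * S j l * V b l)"
    using svd assms unfolding is_svd_def by blast
  also have "\<dots> = (\<Sum>j<m. \<Sum>l<n. if l = j then U a j * S j j * V b j else 0)"
    using svd unfolding is_svd_def by (intro sum.cong refl) auto
  also have "\<dots> = (\<Sum>j\<in>{..<m} \<inter> {j. j < n}. U a j * S j j * V b j)"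
    by (simp add: sum.inter_restrict)
  also have "{..<m} \<inter> {j. j < n} = {..<min m n}" by auto
  finally show ?thesis .
qed

lemma sum_power2_orthogonal_sandwich:
  assumes U: "orthogonal_mat m U" and V: "orthogonal_mat n V" and J: "J \<subseteq> {..<min m n}"
  shows "(\<Sum>a<m. \<Sum>b<n. (\<Sum>j\<in>J. U a j * t j * V b j)\<^sup>2) = (\<Sum>j\<in>J. (t j)\<^sup>2)"
proof -
  have "finite J" using J finite_subset by blast
  have Ucols: "(\<Sum>a<m. U a j * U a j) = 1" if "j \<in> J" for j
    using U J that unfolding orthogonal_mat_def by auto
  have Vcols: "\<forall>k\<in>J. \<forall>k'\<in>J. (\<Sum>c<n. V c k * V c k') = (if k = k' then 1 else 0)"
    using V J unfolding orthogonal_mat_def by (simp add: subset_iff)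
  have "(\<Sum>a<m. \<Sum>b<n. (\<Sum>j\<in>J. U a j * t j * V b j)\<^sup>2) = (\<Sum>a<m. \<Sum>j\<in>J. (U a j * t j)\<^sup>2)"
    by (intro sum.cong refl sum_power2_lincomb_orthonormal[OF \<open>finite J\<close> Vcols])
  also have "\<dots> = (\<Sum>j\<in>J. (t j)\<^sup>2 * (\<Sum>a<m. U a j * U a j))"
    by (simp add: sum.swap[of _ "{..<m}"] sum_distrib_left power2_eq_square algebra_simps)
  also have "\<dots> = (\<Sum>j\<in>J. (t j)\<^sup>2)"
    using Ucols by simp
  finally show ?thesis .
qed

definition truncated_svd :: "nat \<Rightarrow> mat \<Rightarrow> mat \<Rightarrow> mat \<Rightarrow> mat" where
  "truncated_svd k U S V = (\<lambda>a b. \<Sum>j<k. U a j * S j j * V b j)"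

lemma is_svd_truncation_error:
  assumes svd: "is_svd m n M U S V" and "k \<le> min m n"
  shows "(\<Sum>a<m. \<Sum>b<n. (M a b - truncated_svd k U S V a b)\<^sup>2) = (\<Sum>j\<in>{k..<min m n}. (S j j)\<^sup>2)"
proof -
  have tail: "M a b - truncated_svd k U S V a b = (\<Sum>j\<in>{k..<min m n}. U a j * S j j * V b j)"
    if "a < m" "b < n" for a b
    using is_svd_diagonal_expansion[OF svd that] \<open>k \<le> min m n\<close>
    by (simp add: truncated_svd_def lessThan_atLeast0
        sum.atLeastLessThan_concat[symmetric, of 0 k "min m n"])
  have "orthogonal_mat m U" "orthogonal_mat n V" using svd unfolding is_svd_def by auto
  moreover have "{k..<min m n} \<subseteq> {..<min m n}" by auto
  ultimately show ?thesis
    using sum_power2_orthogonal_sandwich[of m U n V "{k..<min m n}" "\<lambda>j. S j j"] by (simp add: tail)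
qed

lemma truncated_osvd_error:
  assumes U3: "orthogonal_mat I3 U3"
    and slice_svd: "\<forall>i<I3. is_svd I1 I2
        (\<lambda>a b. mode3_prod I3 A (\<lambda>l k. U3 k l) a b i) (Us i) (Ss i) (Vs i)"
    and ranks: "\<forall>i<I3. k i \<le> min I1 I2"
  shows "(\<Sum>a<I1. \<Sum>b<I2. \<Sum>c<I3. (A a b c
            - mode3_prod I3 (\<lambda>a b i. truncated_svd (k i) (Us i) (Ss i) (Vs i) a b) U3 a b c)\<^sup>2)
       = (\<Sum>i<I3. \<Sum>j\<in>{k i..<min I1 I2}. (Ss i j j)\<^sup>2)"
proof -
  define At where "At = mode3_prod I3 A (\<lambda>l k. U3 k l)"
  define T where "T = (\<lambda>a b i. truncated_svd (k i) (Us i) (Ss i) (Vs i) a b)"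
  have residual: "A a b c - mode3_prod I3 T U3 a b c = mode3_prod I3 (\<lambda>a b i. At a b i - T a b i) U3 a b c"
    if "c < I3" for a b c
    using mode3_prod_orthogonal_inverse[OF U3 that, of A a b, folded At_def]
    by (simp add: mode3_prod_def sum_subtractf left_diff_distrib)
  have slice_error: "(\<Sum>a<I1. \<Sum>b<I2. (At a b i - T a b i)\<^sup>2) = (\<Sum>j\<in>{k i..<min I1 I2}. (Ss i j j)\<^sup>2)"
    if "i < I3" for i
    using is_svd_truncation_error[OF slice_svd[rule_format, OF that, folded At_def]] ranks that
    by (simp add: T_def)
  have "(\<Sum>a<I1. \<Sum>b<I2. \<Sum>c<I3. (A a b c - mode3_prod I3 T U3 a b c)\<^sup>2)
      = (\<Sum>a<I1. \<Sum>b<I2. \<Sum>c<I3. (mode3_prod I3 (\<lambda>a b i. At a b i - T a b i) U3 a b c)\<^sup>2)"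
    using residual by simp
  also have "\<dots> = (\<Sum>i<I3. \<Sum>a<I1. \<Sum>b<I2. (At a b i - T a b i)\<^sup>2)"
    by (rule sum_power2_mode3_prod_orthogonal[OF U3])
  also have "\<dots> = (\<Sum>i<I3. \<Sum>j\<in>{k i..<min I1 I2}. (Ss i j j)\<^sup>2)"
    using slice_error by simp
  finally show ?thesis unfolding T_def .
qed

lemma slice_prod_truncated_svd:
  assumes "k i \<le> r"
  shows "slice_prod r (slice_prod r (\<lambda>a j i. if j < k i then U i a j else 0)
                                    (\<lambda>j l i. if j = l \<and> j < k i then S i j j else 0))
                      (\<lambda>j b i. if j < k i then V i b j else 0) a b i
       = truncated_svd (k i) (U i) (S i) (V i) a b"
proof -
  have inner: "(\<Sum>m<r. (if m < k i then U i a m else 0) * (if m = l \<and> m < k i then S i m m else 0))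
      = (if l < k i then U i a l * S i l l else 0)" if "l < r" for l
  proof -
    have "(\<Sum>m<r. (if m < k i then U i a m else 0) * (if m = l \<and> m < k i then S i m m else 0))
        = (\<Sum>m<r. if m = l then (if l < k i then U i a l * S i l l else 0) else 0)"
      by (intro sum.cong refl) auto
    then show ?thesis using that by simp
  qed
  have "slice_prod r (slice_prod r (\<lambda>a j i. if j < k i then U i a j else 0)
                                    (\<lambda>j l i. if j = l \<and> j < k i then S i j j else 0))
                      (\<lambda>j b i. if j < k i then V i b j else 0) a b i
      = (\<Sum>j<r. if j < k i then U i a j * S i j j * V i b j else 0)"
    unfolding slice_prod_def by (intro sum.cong refl) (simp add: inner)
  also have "\<dots> = truncated_svd (k i) (U i) (S i) (V i) a b"
    unfolding truncated_svd_def using assms by (intro sum.mono_neutral_cong_right) auto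
  finally show ?thesis .
qed

lemma mode3_prod_truncated_slices:
  assumes "k1 \<le> n" and "\<forall>i<k1. k i \<le> r"
  shows "mode3_prod k1 (slice_prod r (slice_prod r (\<lambda>a j i. if j < k i then U i a j else 0)
                                    (\<lambda>j l i. if j = l \<and> j < k i then S i j j else 0))
                      (\<lambda>j b i. if j < k i then V i b j else 0)) M a b c
       = mode3_prod n (\<lambda>a b i. truncated_svd (if i < k1 then k i else 0) (U i) (S i) (V i) a b) M a b c"
proof -
  have "mode3_prod k1 (slice_prod r (slice_prod r (\<lambda>a j i. if j < k i then U i a j else 0)
                                    (\<lambda>j l i. if j = l \<and> j < k i then S i j j else 0))
                      (\<lambda>j b i. if j < k i then V i b j else 0)) M a b c
      = (\<Sum>i<k1. truncated_svd (k i) (U i) (S i) (V i) a b * M c i)"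
    unfolding mode3_prod_def using assms(2) by (intro sum.cong refl) (simp add: slice_prod_truncated_svd)
  also have "\<dots> = (\<Sum>i<n. truncated_svd (if i < k1 then k i else 0) (U i) (S i) (V i) a b * M c i)"
    using assms(1) by (intro sum.mono_neutral_cong_left) (auto simp: truncated_svd_def)
  finally show ?thesis by (simp add: mode3_prod_def)
qed

theorem theorem3p3:
  fixes I1 I2 I3 k1 :: nat
    and A :: tensor3
    and U3 :: mat
    and Us Ss Vs :: "nat \<Rightarrow> mat"
    and k2 :: "nat \<Rightarrow> nat"
  assumes svd3: "\<exists>S V. is_svd I3 (I1 * I2) (unfold3 I1 A) U3 S V"
    and slice_svd: "\<forall>i<I3. is_svd I1 I2
        (\<lambda>a b. mode3_prod I3 A (\<lambda>l k. U3 k l) a b i) (Us i) (Ss i) (Vs i)"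
    and k1: "1 \<le> k1" "k1 \<le> I3"
    and k2: "\<forall>i<k1. k2 i \<le> min I1 I2"
  shows
    "let r2 = min I1 I2;
         s = (\<lambda>j i. Ss i j j);
         Uk = (\<lambda>a j i. if j < k2 i then Us i a j else 0);
         Sk = (\<lambda>j l i. if j = l \<and> j < k2 i then Ss i j j else 0);
         Vk = (\<lambda>j b i. if j < k2 i then Vs i b j else 0);
         Ak = mode3_prod k1 (slice_prod r2 (slice_prod r2 Uk Sk) Vk) (\<lambda>l k. U3 l k)
     in (frob_norm I1 I2 I3 (\<lambda>a b c. A a b c - Ak a b c))\<^sup>2
        = (\<Sum>i<k1. \<Sum>j\<in>{k2 i..<r2}. (s j i)\<^sup>2)
          + (\<Sum>i\<in>{k1..<I3}. \<Sum>j<r2. (s j i)\<^sup>2)"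
proof -
  have U3: "orthogonal_mat I3 U3" using svd3 unfolding is_svd_def by blast
  have ranks: "\<forall>i<I3. (if i < k1 then k2 i else 0) \<le> min I1 I2" using k2 by simp
  have "(\<Sum>i<I3. \<Sum>j\<in>{(if i < k1 then k2 i else 0)..<min I1 I2}. (Ss i j j)\<^sup>2)
      = (\<Sum>i<k1. \<Sum>j\<in>{k2 i..<min I1 I2}. (Ss i j j)\<^sup>2) + (\<Sum>i\<in>{k1..<I3}. \<Sum>j<min I1 I2. (Ss i j j)\<^sup>2)"
    by (simp add: sum.atLeastLessThan_concat[OF zero_le k1(2), unfolded atLeast0LessThan, symmetric]
        atLeast0LessThan)
  then show ?thesis
    using truncated_osvd_error[OF U3 slice_svd ranks]
    unfolding Let_def frob_norm_def
    by (simp add: mode3_prod_truncated_slices[OF k1(2) k2] sum_nonneg)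
qed

end
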